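(* Let $(A,\mu,\alpha,\beta)$ be a BiHom-associative algebra and let $\sigma,\tau,\eta,R:A\to A$ be linear maps such that $\sigma,\tau,\eta$ are algebra maps (multiplicative for $\mu$), $R$ is a $\{\sigma,\tau\}$-Rota-Baxter operator, and any two of the maps $\alpha,\beta,\sigma,\tau,\eta,R$ commute. Define operations on $A$ by $x\prec y=\sigma(x)R(\eta(y))$ and $x\succ y=R(x)\tau(\eta(y))$ for $x,y\in A$. Then $(A,\prec,\succ,\alpha\sigma,\beta\tau\eta)$ is a BiHom-dendriform algebra.
   Context: Work over a field $\Bbbk$; $\mu(x\otimes y)=xy$. A BiHom-associative algebra $(A,\mu,\alpha,\beta)$ consists of a linear space $A$, a bilinear multiplication $\mu$, and linear maps $\alpha,\beta:A\to A$ with $\alpha\beta=\beta\alpha$, $\alpha(xy)=\alpha(x)\alpha(y)$, $\beta(xy)=\beta(x)\beta(y)$ and $\alpha(x)(yz)=(xy)\beta(z)$ for all $x,y,z$. For algebra maps $\sigma,\tau$, a linear map $R$ is a $\{\sigma,\tau\}$-Rota-Baxter operator if $R(\sigma(a))R(\tau(b))=R\big(\sigma(a)R(b)+R(a)\tau(b)\big)$ for all $a,b\in A$. A BiHom-dendriform algebra $(A,\prec,\succ,\alpha',\beta')$ consists of a linear space $A$, bilinear operations $\prec,\succ$, and commuting linear maps $\alpha',\beta'$ that are multiplicative with respect to both $\prec$ and $\succ$, such that for all $x,y,z$: $(x\prec y)\prec\beta'(z)=\alpha'(x)\prec(y\prec z+y\succ z)$; $(x\succ y)\prec\beta'(z)=\alpha'(x)\succ(y\prec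 z)$; $\alpha'(x)\succ(y\succ z)=(x\prec y+x\succ y)\succ\beta'(z)$. *)

theory Defs
  imports Main HOL.Vector_Spaces
begin

definition bilinear_map :: "('k::field \<Rightarrow> 'a::ab_group_add \<Rightarrow> 'a) \<Rightarrow> ('a \<Rightarrow> 'a \<Rightarrow> 'a) \<Rightarrow> bool" where
  "bilinear_map scale m \<longleftrightarrow>
     (\<forall>x. Vector_Spaces.linear scale scale (m x)) \<and>
     (\<forall>y. Vector_Spaces.linear scale scale (\<lambda>x. m x y))"

definition multiplicative :: "('a \<Rightarrow> 'a \<Rightarrow> 'a) \<Rightarrow> ('a \<Rightarrow> 'a) \<Rightarrow> bool" where
  "multiplicative m f \<longleftrightarrow> (\<forall>x y. f (m x y) = m (f x) (f y))"

definition BiHom_assoc_algebra ::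
  "('k::field \<Rightarrow> 'a::ab_group_add \<Rightarrow> 'a) \<Rightarrow> ('a \<Rightarrow> 'a \<Rightarrow> 'a) \<Rightarrow> ('a \<Rightarrow> 'a) \<Rightarrow> ('a \<Rightarrow> 'a) \<Rightarrow> bool" where
  "BiHom_assoc_algebra scale m \<alpha> \<beta> \<longleftrightarrow>
     vector_space scale \<and> bilinear_map scale m \<and>
     Vector_Spaces.linear scale scale \<alpha> \<and> Vector_Spaces.linear scale scale \<beta> \<and>
     \<alpha> \<circ> \<beta> = \<beta> \<circ> \<alpha> \<and> multiplicative m \<alpha> \<and> multiplicative m \<beta> \<and>
     (\<forall>x y z. m (\<alpha> x) (m y z) = m (m x y) (\<beta> z))"

definition Rota_Baxter_op ::
  "('a::ab_group_add \<Rightarrow> 'a \<Rightarrow> 'a) \<Rightarrow> ('a \<Rightarrow> 'a) \<Rightarrow> ('a \<Rightarrow> 'a) \<Rightarrow> ('a \<Rightarrow> 'a) \<Rightarrow> bool" where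
  "Rota_Baxter_op m \<sigma> \<tau> R \<longleftrightarrow>
     (\<forall>a b. m (R (\<sigma> a)) (R (\<tau> b)) = R (m (\<sigma> a) (R b) + m (R a) (\<tau> b)))"

definition BiHom_dendriform_algebra ::
  "('k::field \<Rightarrow> 'a::ab_group_add \<Rightarrow> 'a) \<Rightarrow> ('a \<Rightarrow> 'a \<Rightarrow> 'a) \<Rightarrow> ('a \<Rightarrow> 'a \<Rightarrow> 'a)
     \<Rightarrow> ('a \<Rightarrow> 'a) \<Rightarrow> ('a \<Rightarrow> 'a) \<Rightarrow> bool" where
  "BiHom_dendriform_algebra scale pr su \<alpha> \<beta> \<longleftrightarrow>
     vector_space scale \<and> bilinear_map scale pr \<and> bilinear_map scale su \<and>
     Vector_Spaces.linear scale scale \<alpha> \<and> Vector_Spaces.linear scale scale \<beta> \<and>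
     \<alpha> \<circ> \<beta> = \<beta> \<circ> \<alpha> \<and>
     multiplicative pr \<alpha> \<and> multiplicative pr \<beta> \<and>
     multiplicative su \<alpha> \<and> multiplicative su \<beta> \<and>
     (\<forall>x y z. pr (pr x y) (\<beta> z) = pr (\<alpha> x) (pr y z + su y z)) \<and>
     (\<forall>x y z. pr (su x y) (\<beta> z) = su (\<alpha> x) (pr y z)) \<and>
     (\<forall>x y z. su (\<alpha> x) (su y z) = su (pr x y + su x y) (\<beta> z))"

end

theory Submission
  imports Defs
begin

text \<open>Each dendriform identity is a single instance of BiHom-associativity once the structure
  maps have been pushed inwards using that they commute and are multiplicative. Where a sum
  \<open>y \<prec> z + y \<succ> z\<close> occurs under \<open>R\<close>, the Rota-Baxter identity first collapses it into the
  product \<open>R (\<sigma> y) R (\<tau> (\<eta> z))\<close>, which is what makes the associativity instance apply.\<close>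

lemma bilinear_map_compose:
  assumes m: "bilinear_map scale m"
    and f: "Vector_Spaces.linear scale scale f" and g: "Vector_Spaces.linear scale scale g"
  shows "bilinear_map scale (\<lambda>x y. m (f x) (g y))"
proof -
  have "Vector_Spaces.linear scale scale (m (f x) \<circ> g)" for x
    using m g by (simp add: bilinear_map_def Vector_Spaces.linear_compose)
  moreover have "Vector_Spaces.linear scale scale ((\<lambda>x. m x (g y)) \<circ> f)" for y
    using m f by (simp add: bilinear_map_def Vector_Spaces.linear_compose)
  ultimately show ?thesis
    by (simp add: bilinear_map_def comp_def)
qed

lemma multiplicative_twisted:
  assumes "multiplicative m \<phi>" "\<And>x. \<phi> (f x) = f (\<phi> x)" "\<And>x. \<phi> (g x) = g (\<phi> x)"
  shows "multiplicative (\<lambda>x y. m (f x) (g y)) \<phi>"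
  using assms by (simp add: multiplicative_def)

locale BiHom_Rota_Baxter =
  fixes m :: "'a::ab_group_add \<Rightarrow> 'a \<Rightarrow> 'a"
    and \<alpha> \<beta> \<sigma> \<tau> \<eta> R :: "'a \<Rightarrow> 'a"
  assumes \<eta>_add: "\<eta> (a + b) = \<eta> a + \<eta> b"
    and \<alpha>_mult: "\<alpha> (m a b) = m (\<alpha> a) (\<alpha> b)"
    and \<beta>_mult: "\<beta> (m a b) = m (\<beta> a) (\<beta> b)"
    and \<sigma>_mult: "\<sigma> (m a b) = m (\<sigma> a) (\<sigma> b)"
    and \<tau>_mult: "\<tau> (m a b) = m (\<tau> a) (\<tau> b)"
    and \<eta>_mult: "\<eta> (m a b) = m (\<eta> a) (\<eta> b)"
    and BiHom_assoc: "m (\<alpha> a) (m b c) = m (m a b) (\<beta> c)"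
    and Rota_Baxter: "m (R (\<sigma> a)) (R (\<tau> b)) = R (m (\<sigma> a) (R b) + m (R a) (\<tau> b))"
    and commute: "f \<in> {\<alpha>, \<beta>, \<sigma>, \<tau>, \<eta>, R} \<Longrightarrow> g \<in> {\<alpha>, \<beta>, \<sigma>, \<tau>, \<eta>, R} \<Longrightarrow> f (g a) = g (f a)"
begin

text \<open>Commutation oriented so that the maps are sorted in the order
  \<open>\<alpha>, \<beta>, \<sigma>, \<tau>, \<eta>, R\<close> from the outside in, which makes it a terminating rewrite system.\<close>
lemma commute_simps:
  "\<beta> (\<alpha> a) = \<alpha> (\<beta> a)" "\<sigma> (\<alpha> a) = \<alpha> (\<sigma> a)" "\<tau> (\<alpha> a) = \<alpha> (\<tau> a)"
  "\<eta> (\<alpha> a) = \<alpha> (\<eta> a)" "R (\<alpha> a) = \<alpha> (R a)"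
  "\<sigma> (\<beta> a) = \<beta> (\<sigma> a)" "\<tau> (\<beta> a) = \<beta> (\<tau> a)" "\<eta> (\<beta> a) = \<beta> (\<eta> a)" "R (\<beta> a) = \<beta> (R a)"
  "\<tau> (\<sigma> a) = \<sigma> (\<tau> a)" "\<eta> (\<sigma> a) = \<sigma> (\<eta> a)" "R (\<sigma> a) = \<sigma> (R a)"
  "\<eta> (\<tau> a) = \<tau> (\<eta> a)" "R (\<tau> a) = \<tau> (R a)"
  "R (\<eta> a) = \<eta> (R a)"
  by (auto intro: commute)

definition prec :: "'a \<Rightarrow> 'a \<Rightarrow> 'a" (infixl \<open>\<prec>\<close> 70)
  where "x \<prec> y = m (\<sigma> x) (R (\<eta> y))"

definition succ :: "'a \<Rightarrow> 'a \<Rightarrow> 'a" (infixl \<open>\<succ>\<close> 70)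
  where "x \<succ> y = m (R x) (\<tau> (\<eta> y))"

lemma R_prec_plus_succ: "R (x \<prec> y + x \<succ> y) = m (R (\<sigma> x)) (R (\<tau> (\<eta> y)))"
  using Rota_Baxter[of x "\<eta> y"] by (simp add: prec_def succ_def commute_simps)

lemma prec_prec: "(x \<prec> y) \<prec> \<beta> (\<tau> (\<eta> z)) = \<alpha> (\<sigma> x) \<prec> (y \<prec> z + y \<succ> z)"
proof -
  have "R (\<eta> (y \<prec> z + y \<succ> z)) = m (R (\<sigma> (\<eta> y))) (R (\<tau> (\<eta> (\<eta> z))))"
    using Rota_Baxter[of "\<eta> y" "\<eta> (\<eta> z)"]
    by (simp add: prec_def succ_def \<eta>_add \<eta>_mult commute_simps)
  then show ?thesis
    using BiHom_assoc[of "\<sigma> (\<sigma> x)" "R (\<sigma> (\<eta> y))" "R (\<tau> (\<eta> (\<eta> z)))"]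
    by (simp add: prec_def \<sigma>_mult commute_simps)
qed

lemma succ_prec: "(x \<succ> y) \<prec> \<beta> (\<tau> (\<eta> z)) = \<alpha> (\<sigma> x) \<succ> (y \<prec> z)"
  using BiHom_assoc[of "R (\<sigma> x)" "\<tau> (\<eta> (\<sigma> y))" "R (\<tau> (\<eta> (\<eta> z)))"]
  by (simp add: prec_def succ_def \<sigma>_mult \<tau>_mult \<eta>_mult commute_simps)

lemma succ_succ: "\<alpha> (\<sigma> x) \<succ> (y \<succ> z) = (x \<prec> y + x \<succ> y) \<succ> \<beta> (\<tau> (\<eta> z))"
  using BiHom_assoc[of "R (\<sigma> x)" "R (\<tau> (\<eta> y))" "\<tau> (\<eta> (\<tau> (\<eta> z)))"]
  unfolding succ_def[of "x \<prec> y + x \<succ> y"] R_prec_plus_succ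
  by (simp add: succ_def \<tau>_mult \<eta>_mult commute_simps)

lemma BiHom_dendriform_algebra_prec_succ:
  assumes "vector_space scale" "bilinear_map scale m"
    and "Vector_Spaces.linear scale scale \<alpha>" "Vector_Spaces.linear scale scale \<beta>"
      "Vector_Spaces.linear scale scale \<sigma>" "Vector_Spaces.linear scale scale \<tau>"
      "Vector_Spaces.linear scale scale \<eta>" "Vector_Spaces.linear scale scale R"
  shows "BiHom_dendriform_algebra scale (\<prec>) (\<succ>) (\<alpha> \<circ> \<sigma>) (\<beta> \<circ> \<tau> \<circ> \<eta>)"
proof -
  have lin_comp: "Vector_Spaces.linear scale scale (R \<circ> \<eta>)" "Vector_Spaces.linear scale scale (\<tau> \<circ> \<eta>)"
    "Vector_Spaces.linear scale scale (\<alpha> \<circ> \<sigma>)" "Vector_Spaces.linear scale scale (\<beta> \<circ> \<tau> \<circ> \<eta>)"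
    using assms by (auto intro: Vector_Spaces.linear_compose)
  have "bilinear_map scale (\<prec>)" "bilinear_map scale (\<succ>)"
    using bilinear_map_compose[OF assms(2)] assms lin_comp
    by (auto simp: prec_def[abs_def] succ_def[abs_def] comp_def)
  moreover have "multiplicative (\<prec>) \<phi>" "multiplicative (\<succ>) \<phi>"
    if "\<phi> \<in> {\<alpha> \<circ> \<sigma>, \<beta> \<circ> \<tau> \<circ> \<eta>}" for \<phi>
  proof -
    have mult_\<phi>: "multiplicative m \<phi>"
      using that by (auto simp: multiplicative_def \<alpha>_mult \<beta>_mult \<sigma>_mult \<tau>_mult \<eta>_mult)
    have comm_\<phi>: "\<phi> (R x) = R (\<phi> x)" "\<phi> (\<sigma> x) = \<sigma> (\<phi> x)" "\<phi> (\<tau> (\<eta> x)) = \<tau> (\<eta> (\<phi> x))"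
      "\<phi> (R (\<eta> x)) = R (\<eta> (\<phi> x))" for x
      using that by (auto simp: commute_simps)
    show "multiplicative (\<prec>) \<phi>" "multiplicative (\<succ>) \<phi>"
      unfolding prec_def[abs_def] succ_def[abs_def]
      by (rule multiplicative_twisted[OF mult_\<phi>]; rule comm_\<phi>)+
  qed
  ultimately show ?thesis
    using assms lin_comp prec_prec succ_prec succ_succ
    by (simp add: BiHom_dendriform_algebra_def fun_eq_iff commute_simps)
qed

end

lemma BiHom_Rota_Baxter_of_BiHom_assoc_algebra:
  assumes alg: "BiHom_assoc_algebra scale m \<alpha> \<beta>"
    and lin_\<eta>: "Vector_Spaces.linear scale scale \<eta>"
    and mult: "multiplicative m \<sigma>" "multiplicative m \<tau>" "multiplicative m \<eta>"
    and RB: "Rota_Baxter_op m \<sigma> \<tau> R"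
    and comm: "\<forall>f\<in>{\<alpha>, \<beta>, \<sigma>, \<tau>, \<eta>, R}. \<forall>g\<in>{\<alpha>, \<beta>, \<sigma>, \<tau>, \<eta>, R}. f \<circ> g = g \<circ> f"
  shows "BiHom_Rota_Baxter m \<alpha> \<beta> \<sigma> \<tau> \<eta> R"
proof
  show "\<eta> (a + b) = \<eta> a + \<eta> b" for a b
    using lin_\<eta> by (simp add: linear_iff)
  show "m (R (\<sigma> a)) (R (\<tau> b)) = R (m (\<sigma> a) (R b) + m (R a) (\<tau> b))" for a b
    using RB by (simp add: Rota_Baxter_op_def)
  show "f (g a) = g (f a)" if "f \<in> {\<alpha>, \<beta>, \<sigma>, \<tau>, \<eta>, R}" "g \<in> {\<alpha>, \<beta>, \<sigma>, \<tau>, \<eta>, R}" for f g a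
    using comm that by (metis comp_apply)
qed (use alg mult in \<open>simp_all add: BiHom_assoc_algebra_def multiplicative_def\<close>)

theorem mainTheorem4:
  fixes scale :: "'k::field \<Rightarrow> 'a::ab_group_add \<Rightarrow> 'a"
    and m :: "'a \<Rightarrow> 'a \<Rightarrow> 'a"
    and \<alpha> \<beta> \<sigma> \<tau> \<eta> R :: "'a \<Rightarrow> 'a"
  assumes alg: "BiHom_assoc_algebra scale m \<alpha> \<beta>"
    and lin: "Vector_Spaces.linear scale scale \<sigma>" "Vector_Spaces.linear scale scale \<tau>"
             "Vector_Spaces.linear scale scale \<eta>" "Vector_Spaces.linear scale scale R"
    and mult: "multiplicative m \<sigma>" "multiplicative m \<tau>" "multiplicative m \<eta>"
    and RB: "Rota_Baxter_op m \<sigma> \<tau> R"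
    and comm: "\<forall>f\<in>{\<alpha>, \<beta>, \<sigma>, \<tau>, \<eta>, R}. \<forall>g\<in>{\<alpha>, \<beta>, \<sigma>, \<tau>, \<eta>, R}. f \<circ> g = g \<circ> f"
  shows "BiHom_dendriform_algebra scale
           (\<lambda>x y. m (\<sigma> x) (R (\<eta> y)))
           (\<lambda>x y. m (R x) (\<tau> (\<eta> y)))
           (\<alpha> \<circ> \<sigma>) (\<beta> \<circ> \<tau> \<circ> \<eta>)"
proof -
  interpret BiHom_Rota_Baxter m \<alpha> \<beta> \<sigma> \<tau> \<eta> R
    using BiHom_Rota_Baxter_of_BiHom_assoc_algebra[OF alg lin(3) mult RB comm] .
  show ?thesis
    using BiHom_dendriform_algebra_prec_succ alg lin
    unfolding BiHom_assoc_algebra_def prec_def[abs_def] succ_def[abs_def] by blast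
qed

end
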